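(* There exists a universal constant $C>0$ such that the following holds. Let $\mathbf{u}=(u^1,\dots,u^m)$ be a viscosity solution to $\Delta\mathbf{u}=|\mathbf{u}|^{p-2}\mathbf{u}$ in $B_1$ such that, for some $\varepsilon>0$ (small), $$|u^i|\le\varepsilon^{3/4}\ \text{in } B_1,\ i=2,\dots,m,\qquad |\mathbf{u}|\equiv0\ \text{in } B_1\cap\{x_n<-\varepsilon\}.$$ Then $$|u^i|\le C\varepsilon^{3/4}(x_n+\varepsilon)^+\ \text{in } B_{1/2},\quad i=2,\dots,m.$$
   Context: Fix integers $n\ge 2$, $m\ge 1$ and $0<p<1$; universal means depending only on $n,m,p$. $t^+=\max\{t,0\}$. For $\mathbf{u}\in C(\Omega;\mathbb{R}^m)$, $\Omega(\mathbf{u}):=\Omega\cap\{|\mathbf{u}|>0\}$, $\Gamma(\mathbf{u}):=\Omega\cap\partial\Omega(\mathbf{u})$. Viscosity solution: $\mathbf{u}\in C(\Omega;\mathbb{R}^m)$ is a viscosity solution of $\Delta\mathbf{u}=|\mathbf{u}|^{p-2}\mathbf{u}$ in $\Omega$ if (i) $\Delta u^i=|\mathbf{u}|^{p-2}u^i$ in $\Omega(\mathbf{u})$ for all $i$, and (ii) for every $x_0\in\Gamma(\mathbf{u})$ and every $f\in\mathbb{R}^m$, $\langle\mathbf{u},f\rangle$ cannot be touched from below at $x_0$ by a function $\varphi\in C^1$ with $\varphi(x_0)=0$, $|\nabla\varphi(x_0)|\ne0$, such that on $\{\varphi\ne0\}$, $\varphi\in C^2$ and $\Delta\varphi>\varphi^{p-1}\chi_{\{\varphi>0\}}$.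 *)

theory Defs
  imports "HOL-Analysis.Analysis"
begin

definition pderiv :: "'n::finite \<Rightarrow> (real^'n \<Rightarrow> real) \<Rightarrow> real^'n \<Rightarrow> real" where
  "pderiv j f x = frechet_derivative f (at x) (axis j 1)"

definition C1_on :: "(real^'n::finite) set \<Rightarrow> (real^'n \<Rightarrow> real) \<Rightarrow> bool" where
  "C1_on S f \<longleftrightarrow> (\<forall>x\<in>S. f differentiable (at x)) \<and> (\<forall>j. continuous_on S (pderiv j f))"

definition C2_on :: "(real^'n::finite) set \<Rightarrow> (real^'n \<Rightarrow> real) \<Rightarrow> bool" where
  "C2_on S f \<longleftrightarrow> C1_on S f \<and> (\<forall>j. C1_on S (pderiv j f))"

definition laplacian :: "(real^'n::finite \<Rightarrow> real) \<Rightarrow> real^'n \<Rightarrow> real" where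
  "laplacian f x = (\<Sum>j\<in>UNIV. pderiv j (pderiv j f) x)"

definition pos_set :: "(real^'n::finite) set \<Rightarrow> (real^'n \<Rightarrow> real^'m::finite) \<Rightarrow> (real^'n) set" where
  "pos_set \<Omega> u = {x\<in>\<Omega>. norm (u x) > 0}"

definition free_bd :: "(real^'n::finite) set \<Rightarrow> (real^'n \<Rightarrow> real^'m::finite) \<Rightarrow> (real^'n) set" where
  "free_bd \<Omega> u = \<Omega> \<inter> frontier (pos_set \<Omega> u)"

definition touches_below :: "(real^'n::finite) set \<Rightarrow> (real^'n \<Rightarrow> real) \<Rightarrow> (real^'n \<Rightarrow> real) \<Rightarrow> real^'n \<Rightarrow> bool" where
  "touches_below U \<phi> g x0 \<longleftrightarrow> open U \<and> x0 \<in> U \<and> \<phi> x0 = g x0 \<and> (\<forall>x\<in>U. \<phi> x \<le> g x)"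

definition admissible_test :: "real \<Rightarrow> (real^'n::finite) set \<Rightarrow> (real^'n \<Rightarrow> real) \<Rightarrow> real^'n \<Rightarrow> bool" where
  "admissible_test p U \<phi> x0 \<longleftrightarrow>
     C1_on U \<phi> \<and> \<phi> x0 = 0 \<and> (\<exists>j. pderiv j \<phi> x0 \<noteq> 0) \<and>
     C2_on {x\<in>U. \<phi> x \<noteq> 0} \<phi> \<and>
     (\<forall>x\<in>U. \<phi> x \<noteq> 0 \<longrightarrow> laplacian \<phi> x > (if \<phi> x > 0 then \<phi> x powr (p - 1) else 0))"

definition viscosity_solution :: "real \<Rightarrow> (real^'n::finite) set \<Rightarrow> (real^'n \<Rightarrow> real^'m::finite) \<Rightarrow> bool" where
  "viscosity_solution p \<Omega> u \<longleftrightarrow>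
     continuous_on \<Omega> u \<and>
     (\<forall>i. C2_on (pos_set \<Omega> u) (\<lambda>x. u x $ i) \<and>
          (\<forall>x\<in>pos_set \<Omega> u. laplacian (\<lambda>y. u y $ i) x = norm (u x) powr (p - 2) * u x $ i)) \<and>
     (\<forall>x0\<in>free_bd \<Omega> u. \<forall>f::real^'m. \<not> (\<exists>U \<phi>. U \<subseteq> \<Omega> \<and>
         touches_below U \<phi> (\<lambda>x. u x \<bullet> f) x0 \<and> admissible_test p U \<phi> x0))"

end

theory Submission
  imports Defs
begin

(* Where u^i <> 0 we have sgn(u^i) \<Delta>u^i = |u|^(p-2) |u^i| > 0,
   so |u^i| - h has no positive interior maximum if h is a quadratic polynomial with \<Delta>h <= 0.
   With t = x_k + \<epsilon>, x' the component of x orthogonal to e_k and N the dimension, the barrier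
   h = M ((20N+8) t - 20N t^2 + 20 |x' - y'|^2) on {|x| <= 3/4, t >= 0} satisfies \<Delta>h = -40 M,
   h >= 0, h >= M >= |u^i| on the sphere |x| = 3/4, while u = 0 on {t = 0} by continuity.
   Hence |u^i| <= h, and evaluating at x = y gives |u^i(y)| <= (20N+8) M t(y). *)

lemma second_derivative_nonpos_at_local_max:
  fixes \<phi> \<phi>' :: "real \<Rightarrow> real"
  assumes "0 < \<delta>"
    and max: "\<And>\<tau>. \<bar>\<tau>\<bar> < \<delta> \<Longrightarrow> \<phi> \<tau> \<le> \<phi> 0"
    and deriv: "\<And>\<tau>. \<bar>\<tau>\<bar> < \<delta> \<Longrightarrow> (\<phi> has_real_derivative \<phi>' \<tau>) (at \<tau>)"
    and deriv2: "(\<phi>' has_real_derivative d) (at 0)"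
  shows "d \<le> 0"
proof (rule ccontr)
  assume "\<not> d \<le> 0"
  have "\<phi>' 0 = 0"
    using DERIV_local_max[OF deriv[of 0] \<open>0 < \<delta>\<close>] max \<open>0 < \<delta>\<close> by auto
  obtain e where "0 < e" and inc: "\<And>h. 0 < h \<Longrightarrow> h < e \<Longrightarrow> \<phi>' 0 < \<phi>' h"
    using DERIV_pos_inc_right[OF deriv2] \<open>\<not> d \<le> 0\<close> by auto
  define b where "b = min e \<delta> / 2"
  have b: "0 < b" "b < e" "b < \<delta>"
    using \<open>0 < e\<close> \<open>0 < \<delta>\<close> by (auto simp: b_def)
  have "continuous_on {0..b} \<phi>"
    using b deriv by (intro continuous_at_imp_continuous_on ballI DERIV_isCont) force
  then have "\<phi> 0 < \<phi> b"
    using b deriv inc \<open>\<phi>' 0 = 0\<close>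
    by (intro DERIV_pos_imp_increasing_open[of 0 b \<phi>]) fastforce+
  with max[of b] b show False by simp
qed

lemma has_real_derivative_along_line:
  fixes g :: "'a::real_normed_vector \<Rightarrow> real"
  assumes "g differentiable (at (a + \<tau> *\<^sub>R e))"
  shows "((\<lambda>t. g (a + t *\<^sub>R e)) has_real_derivative frechet_derivative g (at (a + \<tau> *\<^sub>R e)) e) (at \<tau>)"
proof -
  let ?D = "frechet_derivative g (at (a + \<tau> *\<^sub>R e))"
  have g: "(g has_derivative ?D) (at (a + \<tau> *\<^sub>R e))"
    using assms frechet_derivative_works by blast
  have line: "((\<lambda>t. a + t *\<^sub>R e) has_derivative (\<lambda>t. t *\<^sub>R e)) (at \<tau>)"
    by (auto intro!: derivative_eq_intros)
  have "((\<lambda>t. g (a + t *\<^sub>R e)) has_derivative (\<lambda>t. ?D (t *\<^sub>R e))) (at \<tau>)"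
    using has_derivative_compose[OF line g] .
  moreover have "?D (t *\<^sub>R e) = t * ?D e" for t
    using linear_scale[OF has_derivative_linear[OF g]] by simp
  ultimately show ?thesis
    by (simp add: has_field_derivative_def mult_commute_abs)
qed

lemma second_pderiv_le_of_quadratic_bound:
  fixes g :: "real^'n::finite \<Rightarrow> real"
  assumes "0 < \<delta>"
    and diff: "\<And>x. x \<in> ball x0 \<delta> \<Longrightarrow> g differentiable (at x)"
    and diff2: "pderiv j g differentiable (at x0)"
    and bound: "\<And>\<tau>. \<bar>\<tau>\<bar> < \<delta> \<Longrightarrow> s * g (x0 + \<tau> *\<^sub>R axis j 1) \<le> s * g x0 + b * \<tau> + c * \<tau>\<^sup>2"
  shows "s * pderiv j (pderiv j g) x0 \<le> 2 * c"
proof -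
  define e :: "real^'n" where "e = axis j 1"
  define \<phi> where "\<phi> \<tau> = s * g (x0 + \<tau> *\<^sub>R e) - b * \<tau> - c * \<tau>\<^sup>2" for \<tau>
  define \<phi>' where "\<phi>' \<tau> = s * pderiv j g (x0 + \<tau> *\<^sub>R e) - b - 2 * c * \<tau>" for \<tau>
  have "s * pderiv j (pderiv j g) x0 - 2 * c \<le> 0"
  proof (rule second_derivative_nonpos_at_local_max[OF \<open>0 < \<delta>\<close>])
    show "\<phi> \<tau> \<le> \<phi> 0" if "\<bar>\<tau>\<bar> < \<delta>" for \<tau>
      using bound[OF that] by (simp add: \<phi>_def e_def)
  next
    fix \<tau> :: real
    assume "\<bar>\<tau>\<bar> < \<delta>"
    then have "g differentiable (at (x0 + \<tau> *\<^sub>R e))"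
      by (intro diff) (simp add: dist_norm e_def)
    then show "(\<phi> has_real_derivative \<phi>' \<tau>) (at \<tau>)"
      unfolding \<phi>_def[abs_def] \<phi>'_def pderiv_def e_def
      by (auto intro!: derivative_eq_intros has_real_derivative_along_line)
  next
    show "(\<phi>' has_real_derivative s * pderiv j (pderiv j g) x0 - 2 * c) (at 0)"
      using has_real_derivative_along_line[of "pderiv j g" x0 0 e] diff2
      unfolding \<phi>'_def[abs_def] pderiv_def[of j "pderiv j g"] e_def
      by (auto intro!: derivative_eq_intros)
  qed
  then show ?thesis by simp
qed

lemma sgn_mult_laplacian_le_at_local_max:
  fixes f h :: "real^'n::finite \<Rightarrow> real" and c :: "'n \<Rightarrow> real"
  assumes "0 < \<delta>"
    and diff: "\<And>x. x \<in> ball x0 \<delta> \<Longrightarrow> f differentiable (at x)"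
    and diff2: "\<And>j. pderiv j f differentiable (at x0)"
    and max: "\<And>x. x \<in> ball x0 \<delta> \<Longrightarrow> \<bar>f x\<bar> - h x \<le> \<bar>f x0\<bar> - h x0"
    and quadratic: "\<And>j. \<exists>b. \<forall>\<tau>. h (x0 + \<tau> *\<^sub>R axis j 1) = h x0 + b * \<tau> + c j * \<tau>\<^sup>2"
  shows "sgn (f x0) * laplacian f x0 \<le> 2 * sum c UNIV"
proof -
  define s where "s = sgn (f x0)"
  have second: "s * pderiv j (pderiv j f) x0 \<le> 2 * c j" for j
  proof -
    obtain b where b: "\<And>\<tau>. h (x0 + \<tau> *\<^sub>R axis j 1) = h x0 + b * \<tau> + c j * \<tau>\<^sup>2"
      using quadratic by blast
    show ?thesis
    proof (rule second_pderiv_le_of_quadratic_bound[OF \<open>0 < \<delta>\<close> diff diff2])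
      fix \<tau> :: real
      assume "\<bar>\<tau>\<bar> < \<delta>"
      then have "x0 + \<tau> *\<^sub>R axis j 1 \<in> ball x0 \<delta>"
        by (simp add: dist_norm)
      \<comment> \<open>so the local maximum of |f| - h at x0 is also one of s f - h\<close>
      moreover have "s * f x \<le> \<bar>f x\<bar>" "s * f x0 = \<bar>f x0\<bar>" for x
        by (auto simp: s_def sgn_if)
      ultimately show "s * f (x0 + \<tau> *\<^sub>R axis j 1) \<le> s * f x0 + b * \<tau> + c j * \<tau>\<^sup>2"
        using max b by (smt (verit))
    qed
  qed
  have "s * laplacian f x0 = (\<Sum>j\<in>UNIV. s * pderiv j (pderiv j f) x0)"
    by (simp add: laplacian_def sum_distrib_left)
  also have "\<dots> \<le> 2 * sum c UNIV"
    by (simp add: sum_distrib_left sum_mono second)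
  finally show ?thesis
    by (simp add: s_def)
qed

definition quadratic_along_axes :: "(real^'n::finite \<Rightarrow> real) \<Rightarrow> ('n \<Rightarrow> real) \<Rightarrow> bool" where
  "quadratic_along_axes h c \<longleftrightarrow>
     (\<forall>x j. \<exists>b. \<forall>\<tau>. h (x + \<tau> *\<^sub>R axis j 1) = h x + b * \<tau> + c j * \<tau>\<^sup>2)"

lemma abs_le_quadratic_barrier:
  fixes f h :: "real^'n::finite \<Rightarrow> real" and c :: "'n \<Rightarrow> real"
  assumes "compact K" "continuous_on K f" "continuous_on K h"
    and "open U" "U \<subseteq> K" "open S" "C2_on S f"
    and outside: "\<And>x. x \<in> K - U \<Longrightarrow> \<bar>f x\<bar> \<le> h x"
    and h_nonneg: "\<And>x. x \<in> U \<Longrightarrow> 0 \<le> h x"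
    and subharmonic: "\<And>x. x \<in> U \<Longrightarrow> f x \<noteq> 0 \<Longrightarrow> x \<in> S \<and> 0 < sgn (f x) * laplacian f x"
    and "quadratic_along_axes h c" "sum c UNIV \<le> 0"
    and "y \<in> K"
  shows "\<bar>f y\<bar> \<le> h y"
proof -
  have "continuous_on K (\<lambda>x. \<bar>f x\<bar> - h x)"
    using assms(2,3) by (intro continuous_intros)
  then obtain x0 where "x0 \<in> K" and x0_max: "\<And>x. x \<in> K \<Longrightarrow> \<bar>f x\<bar> - h x \<le> \<bar>f x0\<bar> - h x0"
    using continuous_attains_sup[OF \<open>compact K\<close>] \<open>y \<in> K\<close> by blast
  have "\<bar>f x0\<bar> \<le> h x0"
  proof (rule ccontr)
    assume "\<not> \<bar>f x0\<bar> \<le> h x0"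
    then have "x0 \<in> U" "f x0 \<noteq> 0"
      using outside h_nonneg \<open>x0 \<in> K\<close> by force+
    with subharmonic have "x0 \<in> S" and pos: "0 < sgn (f x0) * laplacian f x0"
      by auto
    obtain \<delta> where "0 < \<delta>" and ball: "ball x0 \<delta> \<subseteq> U \<inter> S"
      using open_contains_ball \<open>x0 \<in> U\<close> \<open>x0 \<in> S\<close> \<open>open U\<close> \<open>open S\<close> by (meson open_Int IntI)
    have "sgn (f x0) * laplacian f x0 \<le> 2 * sum c UNIV"
    proof (rule sgn_mult_laplacian_le_at_local_max[OF \<open>0 < \<delta>\<close>])
      show "f differentiable (at x)" if "x \<in> ball x0 \<delta>" for x
        using \<open>C2_on S f\<close> ball that unfolding C2_on_def C1_on_def by blast
      show "pderiv j f differentiable (at x0)" for j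
        using \<open>C2_on S f\<close> \<open>x0 \<in> S\<close> unfolding C2_on_def C1_on_def by blast
      show "\<bar>f x\<bar> - h x \<le> \<bar>f x0\<bar> - h x0" if "x \<in> ball x0 \<delta>" for x
        using x0_max ball that \<open>U \<subseteq> K\<close> by blast
    qed (use \<open>quadratic_along_axes h c\<close> in \<open>simp add: quadratic_along_axes_def\<close>)
    with pos \<open>sum c UNIV \<le> 0\<close> show False
      by linarith
  qed
  then show ?thesis
    using x0_max[OF \<open>y \<in> K\<close>] by linarith
qed

lemma open_pos_set:
  assumes "continuous_on \<Omega> u" "open \<Omega>"
  shows "open (pos_set \<Omega> u)"
proof -
  have "pos_set \<Omega> u = \<Omega> \<inter> u -` (- {0})"
    by (auto simp: pos_set_def)
  then show ?thesis
    using continuous_open_preimage[OF assms, of "- {0}"] by auto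
qed

lemma viscosity_solution_component_subharmonic:
  assumes "viscosity_solution p \<Omega> u" "x \<in> \<Omega>" "u x $ i \<noteq> 0"
  shows "x \<in> pos_set \<Omega> u \<and> 0 < sgn (u x $ i) * laplacian (\<lambda>y. u y $ i) x"
proof
  have "\<bar>u x $ i\<bar> \<le> norm (u x)"
    by (rule component_le_norm_cart)
  then show "x \<in> pos_set \<Omega> u"
    using assms(2,3) by (auto simp: pos_set_def)
  then have "laplacian (\<lambda>y. u y $ i) x = norm (u x) powr (p - 2) * u x $ i"
    using assms(1) unfolding viscosity_solution_def by blast
  moreover have "0 < norm (u x) powr (p - 2) * \<bar>u x $ i\<bar>"
    using \<open>x \<in> pos_set \<Omega> u\<close> assms(3) by (simp add: pos_set_def)
  ultimately show "0 < sgn (u x $ i) * laplacian (\<lambda>y. u y $ i) x"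
    by (metis abs_sgn mult.commute mult.left_commute)
qed

lemma continuous_const_on_closed_halfspace:
  fixes u :: "real^'n::finite \<Rightarrow> 'b::t2_space"
  assumes "continuous_on \<Omega> u" "open \<Omega>" "x \<in> \<Omega>" "x $ k \<le> a"
    and zero: "\<And>y. y \<in> \<Omega> \<Longrightarrow> y $ k < a \<Longrightarrow> u y = z"
  shows "u x = z"
proof -
  define A where "A = {y \<in> \<Omega>. y $ k < a}"
  obtain r where "0 < r" and "ball x r \<subseteq> \<Omega>"
    using assms(2,3) open_contains_ball by blast
  have "x islimpt A"
  proof (rule islimpt_approachable[THEN iffD2], intro allI impI)
    fix e :: real
    assume "0 < e"
    define y where "y = x - (min e r / 2) *\<^sub>R axis k 1"
    have "dist y x < e" "dist y x < r"
      using \<open>0 < e\<close> \<open>0 < r\<close> by (auto simp: y_def dist_norm)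
    then have "y \<in> A"
      using \<open>ball x r \<subseteq> \<Omega>\<close> \<open>x $ k \<le> a\<close> \<open>0 < e\<close> \<open>0 < r\<close>
      by (auto simp: A_def y_def dist_commute)
    moreover have "y \<noteq> x"
      using \<open>0 < e\<close> \<open>0 < r\<close> by (auto simp: y_def axis_eq_0_iff)
    ultimately show "\<exists>y\<in>A. y \<noteq> x \<and> dist y x < e"
      using \<open>dist y x < e\<close> by blast
  qed
  then have "at x within A \<noteq> bot"
    by (simp add: trivial_limit_within)
  moreover have "(u \<longlongrightarrow> u x) (at x within A)"
    using assms(1-3) continuous_on_eq_continuous_at[OF assms(2)]
    by (meson continuous_at_imp_continuous_at_within continuous_within)
  moreover have "(u \<longlongrightarrow> z) (at x within A)"
    by (rule tendsto_eventually) (auto simp: A_def zero eventually_at_filter)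
  ultimately show ?thesis
    using tendsto_unique by blast
qed

(* (20N+8) t - 20N t^2 + 20 |x' - y'|^2, with the horizontal paraboloid |x' - y'|^2 written as
   |x - y|^2 - (x_k - y_k)^2. *)
definition barrier :: "'n::finite \<Rightarrow> real \<Rightarrow> real^'n \<Rightarrow> real^'n \<Rightarrow> real" where
  "barrier k \<epsilon> y x =
     (let N = real CARD('n); t = x $ k + \<epsilon>
      in (20 * N + 8) * t - 20 * N * t\<^sup>2 + 20 * ((norm (x - y))\<^sup>2 - (x $ k - y $ k)\<^sup>2))"

lemma quadratic_along_axes_barrier:
  fixes k :: "'n::finite"
  shows "quadratic_along_axes (\<lambda>x. M * barrier k \<epsilon> y x)
    (\<lambda>j. M * (if j = k then - 20 * real CARD('n) else 20))"
  unfolding quadratic_along_axes_def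
proof (intro allI)
  fix x j
  have norm_sq: "(norm (x + \<tau> *\<^sub>R axis j 1 - y))\<^sup>2 = (norm (x - y))\<^sup>2 + 2 * \<tau> * (x $ j - y $ j) + \<tau>\<^sup>2"
    for \<tau>
  proof -
    have "x + \<tau> *\<^sub>R axis j 1 - y = (x - y) + \<tau> *\<^sub>R axis j 1" by simp
    then show ?thesis
      by (simp only: power2_norm_eq_inner)
        (simp add: inner_add_left inner_add_right inner_axis inner_axis' power2_eq_square algebra_simps)
  qed
  have "\<exists>b. \<forall>\<tau>. barrier k \<epsilon> y (x + \<tau> *\<^sub>R axis j 1) =
     barrier k \<epsilon> y x + b * \<tau> + (if j = k then - 20 * real CARD('n) else 20) * \<tau>\<^sup>2"
  proof (cases "j = k")
    case True
    define N where "N = real CARD('n)"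
    show ?thesis
      unfolding True
      by (rule exI[of _ "20 * N + 8 - 40 * N * (x $ k + \<epsilon>)"])
        (simp only: barrier_def Let_def norm_sq[unfolded True],
         simp add: N_def algebra_simps power2_eq_square)
  next
    case False
    show ?thesis
      by (rule exI[of _ "40 * (x $ j - y $ j)"])
        (simp only: barrier_def Let_def norm_sq,
         simp add: False not_sym[OF False] axis_def algebra_simps)
  qed
  then obtain b where "\<forall>\<tau>. barrier k \<epsilon> y (x + \<tau> *\<^sub>R axis j 1) =
      barrier k \<epsilon> y x + b * \<tau> + (if j = k then - 20 * real CARD('n) else 20) * \<tau>\<^sup>2" ..
  then show "\<exists>b. \<forall>\<tau>. M * barrier k \<epsilon> y (x + \<tau> *\<^sub>R axis j 1) =
      M * barrier k \<epsilon> y x + b * \<tau> + M * (if j = k then - 20 * real CARD('n) else 20) * \<tau>\<^sup>2"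
    by (intro exI[of _ "M * b"]) (simp add: algebra_simps)
qed

(* The \<tau>^2-coefficients in quadratic_along_axes_barrier are half the pure second derivatives of the
   barrier, so this says that its Laplacian is -40. *)
lemma sum_barrier_axis_coeff:
  fixes k :: "'n::finite"
  shows "(\<Sum>j\<in>UNIV. if j = k then - 20 * real CARD('n) else 20) = - 20"
  by (simp add: sum.If_cases Diff_eq[symmetric] card_Diff_singleton of_nat_diff algebra_simps)

lemma norm_diff_axis_component_sq:
  fixes z :: "real^'n::finite"
  shows "(norm (z - (z $ k) *\<^sub>R axis k 1))\<^sup>2 = (norm z)\<^sup>2 - (z $ k)\<^sup>2"
  unfolding power2_norm_eq_inner
  by (simp add: inner_diff_left inner_diff_right inner_axis inner_axis' power2_eq_square)

lemma barrier_lower_bound: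
  fixes k :: "'n::finite"
  assumes "0 \<le> x $ k + \<epsilon>" "x $ k + \<epsilon> \<le> 1"
  shows "8 * (x $ k + \<epsilon>) + 20 * (norm ((x - y) - (x $ k - y $ k) *\<^sub>R axis k 1))\<^sup>2
    \<le> barrier k \<epsilon> y x"
proof -
  define t where "t = x $ k + \<epsilon>"
  define N where "N = real CARD('n)"
  have "t\<^sup>2 \<le> t"
    using assms by (simp add: t_def power2_eq_square mult_left_le)
  then have "N * t\<^sup>2 \<le> N * t"
    by (simp add: N_def mult_left_mono)
  moreover have "barrier k \<epsilon> y x = (20 * N + 8) * t - 20 * N * t\<^sup>2
      + 20 * (norm ((x - y) - (x $ k - y $ k) *\<^sub>R axis k 1))\<^sup>2"
    using norm_diff_axis_component_sq[of "x - y" k] by (simp add: barrier_def Let_def t_def N_def)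
  ultimately show ?thesis
    unfolding t_def by (simp add: algebra_simps)
qed

lemma barrier_nonneg:
  fixes k :: "'n::finite"
  assumes "0 \<le> x $ k + \<epsilon>" "x $ k + \<epsilon> \<le> 1"
  shows "0 \<le> barrier k \<epsilon> y x"
  by (rule order_trans[OF _ barrier_lower_bound[OF assms]]) (use assms(1) in simp)

lemma one_le_barrier_on_sphere:
  fixes k :: "'n::finite"
  assumes "norm x = 3/4" "-\<epsilon> \<le> x $ k" "0 \<le> \<epsilon>" "\<epsilon> \<le> 1/8" "norm y < 1/2"
  shows "1 \<le> barrier k \<epsilon> y x"
proof -
  define P where "P z = z - (z $ k) *\<^sub>R axis k (1::real)" for z :: "real^'n"
  have "x $ k \<le> 3/4"
    using component_le_norm_cart[of x k] assms(1) by simp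
  then have bound: "8 * (x $ k + \<epsilon>) + 20 * (norm (P x - P y))\<^sup>2 \<le> barrier k \<epsilon> y x"
    using barrier_lower_bound[of x k \<epsilon> y] assms(2,4) by (simp add: P_def algebra_simps)
  show ?thesis
  proof (cases "1/8 \<le> x $ k + \<epsilon>")
    case True
    have "8 * (x $ k + \<epsilon>) \<le> barrier k \<epsilon> y x"
      by (rule order_trans[OF _ bound]) simp
    with True show ?thesis by (simp add: distrib_left)
  next
    case False
    have "(norm (P y))\<^sup>2 \<le> (norm y)\<^sup>2"
      using norm_diff_axis_component_sq[of y k] by (simp add: P_def)
    then have "norm (P y) \<le> norm y"
      using power2_le_imp_le norm_ge_zero by blast
    have "\<bar>x $ k\<bar> \<le> 1/8"
      using False assms(2-4) by linarith
    then have "(x $ k)\<^sup>2 \<le> (1/8)\<^sup>2"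
      by (simp add: power2_le_iff_abs_le)
    then have "(73/100)\<^sup>2 \<le> (norm (P x))\<^sup>2"
      using norm_diff_axis_component_sq[of x k] assms(1) by (simp add: P_def power2_eq_square)
    then have "73/100 \<le> norm (P x)"
      using power2_le_imp_le norm_ge_zero by blast
    then have "23/100 \<le> norm (P x) - norm (P y)"
      using \<open>norm (P y) \<le> norm y\<close> assms(5) by linarith
    also have "\<dots> \<le> norm (P x - P y)"
      by (rule norm_triangle_ineq2)
    finally have "23/100 \<le> norm (P x - P y)" .
    then have "(23/100)\<^sup>2 \<le> (norm (P x - P y))\<^sup>2"
      by (rule power_mono) simp
    then have "1 \<le> 20 * (norm (P x - P y))\<^sup>2"
      by (simp add: power2_eq_square)
    moreover have "0 \<le> 8 * (x $ k + \<epsilon>)"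
      using assms(2) by simp
    ultimately show ?thesis
      using bound by linarith
  qed
qed

lemma component_le_barrier_on_boundary:
  fixes u :: "real^'n::finite \<Rightarrow> real^'m::finite"
  assumes cont: "continuous_on (ball 0 1) u"
    and "0 \<le> \<epsilon>" "\<epsilon> \<le> 1/8" "0 \<le> M"
    and bound: "\<And>x. x \<in> ball 0 1 \<Longrightarrow> \<bar>u x $ i\<bar> \<le> M"
    and zero: "\<And>x. x \<in> ball 0 1 \<Longrightarrow> x $ k < -\<epsilon> \<Longrightarrow> u x = 0"
    and "y \<in> ball 0 (1/2)" "x \<in> cball 0 (3/4)" "-\<epsilon> \<le> x $ k"
    and boundary: "x $ k = -\<epsilon> \<or> norm x = 3/4"
  shows "\<bar>u x $ i\<bar> \<le> M * barrier k \<epsilon> y x"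
  using boundary
proof
  assume "x $ k = -\<epsilon>"
  moreover have "x \<in> ball 0 1"
    using \<open>x \<in> cball 0 (3/4)\<close> by simp
  ultimately have "u x = 0"
    using zero by (intro continuous_const_on_closed_halfspace[OF cont open_ball, of x k "-\<epsilon>"]) auto
  moreover have "0 \<le> barrier k \<epsilon> y x"
    using \<open>x $ k = -\<epsilon>\<close> by (intro barrier_nonneg) simp_all
  ultimately show ?thesis
    using \<open>0 \<le> M\<close> by simp
next
  assume "norm x = 3/4"
  then have "1 \<le> barrier k \<epsilon> y x"
    using one_le_barrier_on_sphere assms(2,3,7,9) by simp
  then have "M \<le> M * barrier k \<epsilon> y x"
    using mult_left_mono[of 1 _ M] \<open>0 \<le> M\<close> by simp
  moreover have "\<bar>u x $ i\<bar> \<le> M"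
    using bound \<open>norm x = 3/4\<close> by simp
  ultimately show ?thesis
    by linarith
qed

lemma viscosity_solution_component_le_barrier:
  fixes u :: "real^'n::finite \<Rightarrow> real^'m::finite"
  assumes vs: "viscosity_solution p (ball 0 1) u"
    and "0 \<le> \<epsilon>" "\<epsilon> \<le> 1/8" "0 \<le> M"
    and bound: "\<And>x. x \<in> ball 0 1 \<Longrightarrow> \<bar>u x $ i\<bar> \<le> M"
    and zero: "\<And>x. x \<in> ball 0 1 \<Longrightarrow> x $ k < -\<epsilon> \<Longrightarrow> u x = 0"
    and "y \<in> ball 0 (1/2)" "-\<epsilon> \<le> y $ k"
  shows "\<bar>u y $ i\<bar> \<le> M * barrier k \<epsilon> y y"
proof -
  define K where "K = cball (0::real^'n) (3/4) \<inter> {x. -\<epsilon> \<le> x $ k}"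
  define U where "U = ball (0::real^'n) (3/4) \<inter> {x. -\<epsilon> < x $ k}"
  have cont: "continuous_on (ball 0 1) u"
    using vs by (simp add: viscosity_solution_def)
  have "U \<subseteq> K" "K \<subseteq> ball 0 1"
    by (auto simp: U_def K_def)
  show ?thesis
  proof (rule abs_le_quadratic_barrier[where f = "\<lambda>x. u x $ i" and h = "\<lambda>x. M * barrier k \<epsilon> y x"
        and K = K and U = U and S = "pos_set (ball 0 1) u"
        and c = "\<lambda>j. M * (if j = k then - 20 * real CARD('n) else 20)"])
    show "compact K"
      unfolding K_def by (intro compact_Int_closed compact_cball closed_halfspace_component_ge_cart)
    show "continuous_on K (\<lambda>x. u x $ i)"
      using continuous_on_subset[OF cont \<open>K \<subseteq> ball 0 1\<close>] by (intro continuous_intros)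
    show "continuous_on K (\<lambda>x. M * barrier k \<epsilon> y x)"
      unfolding barrier_def Let_def by (intro continuous_intros)
    show "open U"
      unfolding U_def by (intro open_Int open_ball open_halfspace_component_gt_cart)
    show "open (pos_set (ball 0 1) u)"
      using cont by (rule open_pos_set) simp
    show "C2_on (pos_set (ball 0 1) u) (\<lambda>x. u x $ i)"
      using vs by (simp add: viscosity_solution_def)
    show "\<bar>u x $ i\<bar> \<le> M * barrier k \<epsilon> y x" if "x \<in> K - U" for x
      using that by (intro component_le_barrier_on_boundary[OF cont _ _ _ bound zero] assms(2-4,7))
        (auto simp: K_def U_def)
    show "0 \<le> M * barrier k \<epsilon> y x" if "x \<in> U" for x
      using that component_le_norm_cart[of x k] \<open>\<epsilon> \<le> 1/8\<close> \<open>0 \<le> M\<close>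
      by (intro mult_nonneg_nonneg barrier_nonneg) (auto simp: U_def)
    show "x \<in> pos_set (ball 0 1) u \<and> 0 < sgn (u x $ i) * laplacian (\<lambda>x. u x $ i) x"
      if "x \<in> U" "u x $ i \<noteq> 0" for x
      using viscosity_solution_component_subharmonic[OF vs] that \<open>U \<subseteq> K\<close> \<open>K \<subseteq> ball 0 1\<close>
      by blast
    show "quadratic_along_axes (\<lambda>x. M * barrier k \<epsilon> y x)
        (\<lambda>j. M * (if j = k then - 20 * real CARD('n) else 20))"
      by (rule quadratic_along_axes_barrier)
    show "(\<Sum>j\<in>UNIV. M * (if j = k then - 20 * real CARD('n) else 20)) \<le> 0"
      using \<open>0 \<le> M\<close> by (simp add: sum_distrib_left[symmetric] sum_barrier_axis_coeff)
  qed (use \<open>U \<subseteq> K\<close> assms(7,8) in \<open>auto simp: K_def\<close>)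
qed

lemma viscosity_solution_component_linear_bound:
  fixes u :: "real^'n::finite \<Rightarrow> real^'m::finite"
  assumes "viscosity_solution p (ball 0 1) u"
    and "0 \<le> \<epsilon>" "\<epsilon> \<le> 1/8" "0 \<le> M"
    and "\<And>x. x \<in> ball 0 1 \<Longrightarrow> \<bar>u x $ i\<bar> \<le> M"
    and zero: "\<And>x. x \<in> ball 0 1 \<Longrightarrow> x $ k < -\<epsilon> \<Longrightarrow> u x = 0"
    and "y \<in> ball 0 (1/2)"
  shows "\<bar>u y $ i\<bar> \<le> (20 * real CARD('n) + 8) * M * max (y $ k + \<epsilon>) 0"
proof (cases "y $ k < -\<epsilon>")
  case True
  then show ?thesis
    using zero[of y] \<open>y \<in> ball 0 (1/2)\<close> by simp
next
  case False
  then have "\<bar>u y $ i\<bar> \<le> M * barrier k \<epsilon> y y"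
    using assms by (intro viscosity_solution_component_le_barrier[where k = k]) auto
  also have "\<dots> \<le> M * ((20 * real CARD('n) + 8) * (y $ k + \<epsilon>))"
    by (intro mult_left_mono \<open>0 \<le> M\<close>) (simp add: barrier_def Let_def)
  finally show ?thesis
    using False by (simp add: algebra_simps)
qed

theorem lemma4p3:
  fixes p :: real
  assumes "CARD('n::finite) \<ge> 2" and "0 < p" and "p < 1"
  shows "\<exists>C>0. \<exists>\<epsilon>0>0. \<forall>(k::'n) (i1::'m::finite) (\<epsilon>::real) (u :: real^'n \<Rightarrow> real^'m).
    (viscosity_solution p (ball 0 1) u \<and> 0 < \<epsilon> \<and> \<epsilon> \<le> \<epsilon>0 \<and>
     (\<forall>x\<in>ball 0 1. \<forall>i. i \<noteq> i1 \<longrightarrow> \<bar>u x $ i\<bar> \<le> \<epsilon> powr (3/4)) \<and>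
     (\<forall>x\<in>ball 0 1. x $ k < - \<epsilon> \<longrightarrow> u x = 0))
    \<longrightarrow> (\<forall>x\<in>ball 0 (1/2). \<forall>i. i \<noteq> i1 \<longrightarrow>
           \<bar>u x $ i\<bar> \<le> C * \<epsilon> powr (3/4) * max (x $ k + \<epsilon>) 0)"
proof (rule exI[of _ "20 * real CARD('n) + 8"], intro exI[of _ "1/8 :: real"] conjI allI impI ballI)
  fix k :: 'n and i1 :: 'm and \<epsilon> :: real and u :: "real^'n \<Rightarrow> real^'m" and x :: "real^'n" and i
  assume "viscosity_solution p (ball 0 1) u \<and> 0 < \<epsilon> \<and> \<epsilon> \<le> 1/8 \<and>
     (\<forall>x\<in>ball 0 1. \<forall>i. i \<noteq> i1 \<longrightarrow> \<bar>u x $ i\<bar> \<le> \<epsilon> powr (3/4)) \<and>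
     (\<forall>x\<in>ball 0 1. x $ k < - \<epsilon> \<longrightarrow> u x = 0)"
    and "x \<in> ball 0 (1/2)" and "i \<noteq> i1"
  then show "\<bar>u x $ i\<bar> \<le> (20 * real CARD('n) + 8) * \<epsilon> powr (3/4) * max (x $ k + \<epsilon>) 0"
    by (intro viscosity_solution_component_linear_bound[where p = p]) auto
qed simp_all

end
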